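(* Let $\phi=(\psi\to(\Box\chi\vee\xi))$ be a d-persistent intuitionistic modal formula that does not contain the proposition letter $p$ as a subformula. Then $\phi^p$ is $\kappa_\emptyset$-persistent.
   Context: Intuitionistic modal formulas are given by $\phi ::= q\mid\bot\mid\phi\wedge\phi\mid\phi\vee\phi\mid\phi\to\phi\mid\Box\phi$. A modal Esakia space is $(X,\leq,R,\tau)$ with $(X,\leq,\tau)$ an Esakia space, $R[x]$ closed for all $x$ and $R=(\leq\circ R\circ\leq)$; a formula is d-persistent if whenever it is valid on a modal Esakia space (with clopen-upset valuations) it is also valid on the underlying modal frame $(X,\leq,R)$ (with arbitrary upset valuations). The translation $(-)^p$ into the conditional language ($\phi ::= q\mid\bot\mid\phi\wedge\phi\mid\phi\vee\phi\mid\phi\to\phi\mid\phi\mathrel{\Box\!\!\!\rightarrow}\phi$) is identity on letters, $\top,\bot$, commutes with $\wedge,\vee,\to$, and sends $\Box\psi$ to $p\mathrel{\Box\!\!\!\rightarrow}\psi^p$. A conditional Esakia space is an Esakia space $(X,\leq,\tau)$ with relations $\{R_a\mid a\text{ a clopen upset}\}$ such that $\{x\mid R_a[x]\subseteq b\}$ is clopen for clopen upsets $a,b$, $(\leq\circ R_a\circ\leq)=R_a$, and each $R_a[x]$ is closed. Its empty fill-in is the conditional frame keeping $R_a$ for clopen upsets $a$ and setting $R_a=\emptyset$ for non-clopen upsets $a$; a formula is $\kappa_\emptyset$-persistent if its validity on any conditional Esakia space implies its validity on the empty fill-in. In conditional frames, $x\models\phi\mathrel{\Box\!\!\!\rightarrow}\psi$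 iff every $y$ with $xR_{V(\phi)}y$ satisfies $\psi$. *)

theory Defs
  imports "HOL-Analysis.Analysis"
begin

datatype fm = Var nat | Bot | And fm fm | Or fm fm | Imp fm fm | Box fm

text \<open>Conditional formulas, with CBoxArr the strict conditional.\<close>
datatype cfm = CVar nat | CBot | CAnd cfm cfm | COr cfm cfm | CImp cfm cfm | CBoxArr cfm cfm

primrec letters :: "fm \<Rightarrow> nat set" where
  "letters (Var q) = {q}"
| "letters Bot = {}"
| "letters (And a b) = letters a \<union> letters b"
| "letters (Or a b) = letters a \<union> letters b"
| "letters (Imp a b) = letters a \<union> letters b"
| "letters (Box a) = letters a"

primrec ptrans :: "nat \<Rightarrow> fm \<Rightarrow> cfm" where
  "ptrans p (Var q) = CVar q"
| "ptrans p Bot = CBot"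
| "ptrans p (And a b) = CAnd (ptrans p a) (ptrans p b)"
| "ptrans p (Or a b) = COr (ptrans p a) (ptrans p b)"
| "ptrans p (Imp a b) = CImp (ptrans p a) (ptrans p b)"
| "ptrans p (Box a) = CBoxArr (CVar p) (ptrans p a)"

definition upset :: "'a set \<Rightarrow> ('a \<Rightarrow> 'a \<Rightarrow> bool) \<Rightarrow> 'a set \<Rightarrow> bool" where
  "upset X le U \<longleftrightarrow> U \<subseteq> X \<and> (\<forall>x\<in>U. \<forall>y\<in>X. le x y \<longrightarrow> y \<in> U)"

definition downset_of :: "'a set \<Rightarrow> ('a \<Rightarrow> 'a \<Rightarrow> bool) \<Rightarrow> 'a set \<Rightarrow> 'a set" where
  "downset_of X le U = {x\<in>X. \<exists>y\<in>U. le x y}"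

definition clopen_upset :: "'a set \<Rightarrow> ('a \<Rightarrow> 'a \<Rightarrow> bool) \<Rightarrow> 'a topology \<Rightarrow> 'a set \<Rightarrow> bool" where
  "clopen_upset X le T U \<longleftrightarrow> upset X le U \<and> openin T U \<and> closedin T U"

definition esakia_space :: "'a set \<Rightarrow> ('a \<Rightarrow> 'a \<Rightarrow> bool) \<Rightarrow> 'a topology \<Rightarrow> bool" where
  "esakia_space X le T \<longleftrightarrow>
     topspace T = X \<and> compact_space T \<and>
     (\<forall>x\<in>X. le x x) \<and>
     (\<forall>x\<in>X. \<forall>y\<in>X. \<forall>z\<in>X. le x y \<longrightarrow> le y z \<longrightarrow> le x z) \<and>
     (\<forall>x\<in>X. \<forall>y\<in>X. le x y \<longrightarrow> le y x \<longrightarrow> x = y) \<and>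
     (\<forall>x\<in>X. \<forall>y\<in>X. \<not> le x y \<longrightarrow> (\<exists>U. clopen_upset X le T U \<and> x \<in> U \<and> y \<notin> U)) \<and>
     (\<forall>U. openin T U \<longrightarrow> openin T (downset_of X le U))"

definition le_comp_closed :: "'a set \<Rightarrow> ('a \<Rightarrow> 'a \<Rightarrow> bool) \<Rightarrow> ('a \<Rightarrow> 'a \<Rightarrow> bool) \<Rightarrow> bool" where
  "le_comp_closed X le R \<longleftrightarrow>
     (\<forall>x\<in>X. \<forall>y\<in>X. R x y \<longleftrightarrow> (\<exists>x'\<in>X. \<exists>y'\<in>X. le x x' \<and> R x' y' \<and> le y' y))"

definition modal_esakia_space ::
  "'a set \<Rightarrow> ('a \<Rightarrow> 'a \<Rightarrow> bool) \<Rightarrow> ('a \<Rightarrow> 'a \<Rightarrow> bool) \<Rightarrow> 'a topology \<Rightarrow> bool" where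
  "modal_esakia_space X le R T \<longleftrightarrow>
     esakia_space X le T \<and>
     (\<forall>x y. R x y \<longrightarrow> x \<in> X \<and> y \<in> X) \<and>
     (\<forall>x\<in>X. closedin T {y. R x y}) \<and>
     le_comp_closed X le R"

text \<open>Conditional Esakia space: relations R_a indexed by sets; only the relations for
  clopen upsets a are constrained (and used).\<close>
definition conditional_esakia_space ::
  "'a set \<Rightarrow> ('a \<Rightarrow> 'a \<Rightarrow> bool) \<Rightarrow> 'a topology \<Rightarrow> ('a set \<Rightarrow> 'a \<Rightarrow> 'a \<Rightarrow> bool) \<Rightarrow> bool" where
  "conditional_esakia_space X le T RC \<longleftrightarrow>
     esakia_space X le T \<and>
     (\<forall>a. clopen_upset X le T a \<longrightarrow>
        (\<forall>x y. RC a x y \<longrightarrow> x \<in> X \<and> y \<in> X) \<and>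
        (\<forall>b. clopen_upset X le T b \<longrightarrow>
             openin T {x\<in>X. \<forall>y. RC a x y \<longrightarrow> y \<in> b} \<and>
             closedin T {x\<in>X. \<forall>y. RC a x y \<longrightarrow> y \<in> b}) \<and>
        le_comp_closed X le (RC a) \<and>
        (\<forall>x\<in>X. closedin T {y. RC a x y}))"

definition empty_fill_in ::
  "'a set \<Rightarrow> ('a \<Rightarrow> 'a \<Rightarrow> bool) \<Rightarrow> 'a topology \<Rightarrow> ('a set \<Rightarrow> 'a \<Rightarrow> 'a \<Rightarrow> bool)
     \<Rightarrow> ('a set \<Rightarrow> 'a \<Rightarrow> 'a \<Rightarrow> bool)" where
  "empty_fill_in X le T RC = (\<lambda>a. if clopen_upset X le T a then RC a else (\<lambda>_ _. False))"

primrec msat ::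
  "'a set \<Rightarrow> ('a \<Rightarrow> 'a \<Rightarrow> bool) \<Rightarrow> ('a \<Rightarrow> 'a \<Rightarrow> bool) \<Rightarrow> (nat \<Rightarrow> 'a set) \<Rightarrow> fm \<Rightarrow> 'a \<Rightarrow> bool" where
  "msat X le R V (Var q) x = (x \<in> V q)"
| "msat X le R V Bot x = False"
| "msat X le R V (And a b) x = (msat X le R V a x \<and> msat X le R V b x)"
| "msat X le R V (Or a b) x = (msat X le R V a x \<or> msat X le R V b x)"
| "msat X le R V (Imp a b) x = (\<forall>y\<in>X. le x y \<longrightarrow> msat X le R V a y \<longrightarrow> msat X le R V b y)"
| "msat X le R V (Box a) x = (\<forall>y\<in>X. R x y \<longrightarrow> msat X le R V a y)"

primrec csat ::
  "'a set \<Rightarrow> ('a \<Rightarrow> 'a \<Rightarrow> bool) \<Rightarrow> ('a set \<Rightarrow> 'a \<Rightarrow> 'a \<Rightarrow> bool) \<Rightarrow> (nat \<Rightarrow> 'a set) \<Rightarrow> cfm \<Rightarrow> 'a \<Rightarrow> bool" where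
  "csat X le RC V (CVar q) x = (x \<in> V q)"
| "csat X le RC V CBot x = False"
| "csat X le RC V (CAnd a b) x = (csat X le RC V a x \<and> csat X le RC V b x)"
| "csat X le RC V (COr a b) x = (csat X le RC V a x \<or> csat X le RC V b x)"
| "csat X le RC V (CImp a b) x = (\<forall>y\<in>X. le x y \<longrightarrow> csat X le RC V a y \<longrightarrow> csat X le RC V b y)"
| "csat X le RC V (CBoxArr a b) x =
     (\<forall>y\<in>X. RC {z\<in>X. csat X le RC V a z} x y \<longrightarrow> csat X le RC V b y)"

definition mvalid_frame :: "'a set \<Rightarrow> ('a \<Rightarrow> 'a \<Rightarrow> bool) \<Rightarrow> ('a \<Rightarrow> 'a \<Rightarrow> bool) \<Rightarrow> fm \<Rightarrow> bool" where
  "mvalid_frame X le R \<phi> \<longleftrightarrow> (\<forall>V. (\<forall>q. upset X le (V q)) \<longrightarrow> (\<forall>x\<in>X. msat X le R V \<phi> x))"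

definition mvalid_space ::
  "'a set \<Rightarrow> ('a \<Rightarrow> 'a \<Rightarrow> bool) \<Rightarrow> ('a \<Rightarrow> 'a \<Rightarrow> bool) \<Rightarrow> 'a topology \<Rightarrow> fm \<Rightarrow> bool" where
  "mvalid_space X le R T \<phi> \<longleftrightarrow>
     (\<forall>V. (\<forall>q. clopen_upset X le T (V q)) \<longrightarrow> (\<forall>x\<in>X. msat X le R V \<phi> x))"

definition cvalid_frame ::
  "'a set \<Rightarrow> ('a \<Rightarrow> 'a \<Rightarrow> bool) \<Rightarrow> ('a set \<Rightarrow> 'a \<Rightarrow> 'a \<Rightarrow> bool) \<Rightarrow> cfm \<Rightarrow> bool" where
  "cvalid_frame X le RC \<phi> \<longleftrightarrow> (\<forall>V. (\<forall>q. upset X le (V q)) \<longrightarrow> (\<forall>x\<in>X. csat X le RC V \<phi> x))"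

definition cvalid_space ::
  "'a set \<Rightarrow> ('a \<Rightarrow> 'a \<Rightarrow> bool) \<Rightarrow> 'a topology \<Rightarrow> ('a set \<Rightarrow> 'a \<Rightarrow> 'a \<Rightarrow> bool) \<Rightarrow> cfm \<Rightarrow> bool" where
  "cvalid_space X le T RC \<phi> \<longleftrightarrow>
     (\<forall>V. (\<forall>q. clopen_upset X le T (V q)) \<longrightarrow> (\<forall>x\<in>X. csat X le RC V \<phi> x))"

definition d_persistent :: "'a itself \<Rightarrow> fm \<Rightarrow> bool" where
  "d_persistent (_ :: 'a itself) \<phi> \<longleftrightarrow>
     (\<forall>(X :: 'a set) le R T. modal_esakia_space X le R T \<longrightarrow> mvalid_space X le R T \<phi>
        \<longrightarrow> mvalid_frame X le R \<phi>)"

definition kappa_empty_persistent :: "'a itself \<Rightarrow> cfm \<Rightarrow> bool" where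
  "kappa_empty_persistent (_ :: 'a itself) \<phi> \<longleftrightarrow>
     (\<forall>(X :: 'a set) le T RC. conditional_esakia_space X le T RC \<longrightarrow> cvalid_space X le T RC \<phi>
        \<longrightarrow> cvalid_frame X le (empty_fill_in X le T RC) \<phi>)"

end

theory Submission
  imports Defs
begin

text \<open>Fix a conditional Esakia space and an upset valuation \<open>V\<close>. If \<open>V p\<close> is a clopen upset,
  then the empty fill-in agrees with the space at the index \<open>V p\<close>, and since \<open>p\<close> does not occur
  in \<open>\<phi>\<close>, evaluating \<open>\<phi>\<^sup>p\<close> amounts to evaluating \<open>\<phi>\<close> on the modal Esakia space with
  relation \<open>R\<^bsub>V p\<^esub>\<close>; there validity transfers from clopen to arbitrary upset valuations by
  d-persistence. If \<open>V p\<close> is not clopen, the fill-in relation \<open>R\<^bsub>V p\<^esub>\<close> is empty, so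
  \<open>p \<box>\<rightarrow> \<chi>\<^sup>p\<close> holds everywhere, and with it the consequent \<open>(p \<box>\<rightarrow> \<chi>\<^sup>p) \<or> \<xi>\<^sup>p\<close>.\<close>

lemma csat_ptrans_eq_msat:
  assumes "p \<notin> letters \<phi>" and "V p \<subseteq> X"
  shows "csat X le RC V (ptrans p \<phi>) x = msat X le (RC (V p)) V \<phi> x"
  using assms
proof (induction \<phi> arbitrary: x)
  case (Box \<phi>)
  have "{z\<in>X. z \<in> V p} = V p" using Box.prems by auto
  then show ?case using Box by simp
qed auto

lemma msat_cong_letters:
  assumes "\<forall>q\<in>letters \<phi>. V q = V' q"
  shows "msat X le R V \<phi> x = msat X le R V' \<phi> x"
  using assms by (induction \<phi> arbitrary: x) auto

lemma modal_esakia_space_conditional_slice: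
  assumes "conditional_esakia_space X le T RC" and "clopen_upset X le T a"
  shows "modal_esakia_space X le (RC a) T"
  using assms unfolding conditional_esakia_space_def modal_esakia_space_def by blast

lemma mvalid_space_of_cvalid_space_ptrans:
  assumes valid: "cvalid_space X le T RC (ptrans p \<phi>)"
    and p: "p \<notin> letters \<phi>" and a: "clopen_upset X le T a"
  shows "mvalid_space X le (RC a) T \<phi>"
  unfolding mvalid_space_def
proof (intro allI impI ballI)
  fix V :: "nat \<Rightarrow> 'a set" and x
  assume V: "\<forall>q. clopen_upset X le T (V q)" and x: "x \<in> X"
  let ?V = "V(p := a)"
  have "\<forall>q. clopen_upset X le T (?V q)" using V a by simp
  then have "csat X le RC ?V (ptrans p \<phi>) x"
    using valid x unfolding cvalid_space_def by blast
  moreover have "a \<subseteq> X" using a unfolding clopen_upset_def upset_def by blast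
  ultimately have "msat X le (RC a) ?V \<phi> x"
    using csat_ptrans_eq_msat[OF p, of ?V X le RC x] by simp
  moreover have "msat X le (RC a) ?V \<phi> x = msat X le (RC a) V \<phi> x"
    using p by (intro msat_cong_letters) auto
  ultimately show "msat X le (RC a) V \<phi> x" by simp
qed

lemma csat_empty_fill_in_ptrans_clopen:
  assumes "d_persistent TYPE('a) \<phi>" and p: "p \<notin> letters \<phi>"
    and space: "conditional_esakia_space (X :: 'a set) le T RC"
    and valid: "cvalid_space X le T RC (ptrans p \<phi>)"
    and V: "\<forall>q. upset X le (V q)" and Vp: "clopen_upset X le T (V p)" and x: "x \<in> X"
  shows "csat X le (empty_fill_in X le T RC) V (ptrans p \<phi>) x"
proof -
  have "mvalid_space X le (RC (V p)) T \<phi>"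
    using mvalid_space_of_cvalid_space_ptrans[OF valid p Vp] .
  then have "mvalid_frame X le (RC (V p)) \<phi>"
    using assms(1) modal_esakia_space_conditional_slice[OF space Vp]
    unfolding d_persistent_def by blast
  then have "msat X le (RC (V p)) V \<phi> x" using V x unfolding mvalid_frame_def by blast
  moreover have "empty_fill_in X le T RC (V p) = RC (V p)"
    using Vp by (simp add: empty_fill_in_def)
  moreover have "V p \<subseteq> X" using V unfolding upset_def by blast
  ultimately show ?thesis
    using csat_ptrans_eq_msat[OF p, of V X le "empty_fill_in X le T RC" x] by simp
qed

lemma csat_empty_fill_in_ptrans_Box_not_clopen:
  assumes "\<not> clopen_upset X le T (V p)" and "V p \<subseteq> X"
  shows "csat X le (empty_fill_in X le T RC) V (ptrans p (Box \<psi>)) x"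
proof -
  have "{z\<in>X. z \<in> V p} = V p" using assms(2) by auto
  then show ?thesis using assms(1) by (simp add: empty_fill_in_def)
qed

theorem theorem7p10:
  fixes psi chi xi :: fm and p :: nat
  assumes "d_persistent TYPE('a) (Imp psi (Or (Box chi) xi))"
    and "p \<notin> letters (Imp psi (Or (Box chi) xi))"
  shows "kappa_empty_persistent TYPE('a) (ptrans p (Imp psi (Or (Box chi) xi)))"
  unfolding kappa_empty_persistent_def cvalid_frame_def
proof (intro allI impI ballI)
  fix X :: "'a set" and le T RC and V :: "nat \<Rightarrow> 'a set" and x
  let ?\<phi> = "Imp psi (Or (Box chi) xi)"
  assume space: "conditional_esakia_space X le T RC"
    and valid: "cvalid_space X le T RC (ptrans p ?\<phi>)"
    and V: "\<forall>q. upset X le (V q)" and x: "x \<in> X"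
  show "csat X le (empty_fill_in X le T RC) V (ptrans p ?\<phi>) x"
  proof (cases "clopen_upset X le T (V p)")
    case True
    show ?thesis by (rule csat_empty_fill_in_ptrans_clopen[OF assms space valid V True x])
  next
    case False
    moreover have "V p \<subseteq> X" using V unfolding upset_def by blast
    ultimately have "csat X le (empty_fill_in X le T RC) V (ptrans p (Box chi)) y" for y
      by (rule csat_empty_fill_in_ptrans_Box_not_clopen)
    then show ?thesis by simp
  qed
qed

end
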